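(* For every $n\ge 0$, the coefficient $\ell_{n,1}$ equals the number of intervals of the Tamari lattice $\mathrm{Tam}_n$, i.e. the number of pairs $(A,B)$ of formulas of size $n$ with frontier $p_0,\dots,p_n$ such that $A\le B$ in the Tamari order. Equivalently, $L_1(z)=\sum_n\ell_{n,1}z^n$ is the ordinary generating function of the number of intervals of $\mathrm{Tam}_n$.
   Context: Formulas are built from atoms by a binary product: every formula is an atom or $A\bullet B$. A context is a finite (possibly empty) list of formulas; commas denote concatenation. Size: $|p|=0$ for atoms, $|A\bullet B|=1+|A|+|B|$. Frontier: $\mathrm{fr}(p)=p$, $\mathrm{fr}(A\bullet B)=\mathrm{fr}(A),\mathrm{fr}(B)$. The Tamari order $\le$ on formulas is the least preorder with $(A\bullet B)\bullet C\le A\bullet(B\bullet C)$ and $A_1\le A_2$, $B_1\le B_2$ implying $A_1\bullet B_1\le A_2\bullet B_2$; $\mathrm{Tam}_n$ is the poset of formulas of size $n$ over a fixed frontier $p_0,\dots,p_n$ of distinct atoms (equivalently, binary trees with $n$ internal nodes under right rotation). A context is irreducible if its leftmost formula is not a product. A focused derivation is a finite derivation tree with no undischarged premises using only: ($\bullet L$) from $A,B,\Delta\vdash C$ infer $A\bullet B,\Delta\vdash C$; ($\bullet R^{foc}$) from $\Gamma\vdash A$ and $\Delta\vdash B$ infer $\Gamma,\Delta\vdash A\bullet B$ with $\Gamma$ irreducible; ($id^{atm}$) $p\vdash p$ for atoms $p$. Let $\ell_{n,k}$ be the number of focused derivations of sequents $\Gamma\vdash B$ with $|B|=n$, $\mathrm{fr}(B)=p_0,\dots,p_n$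 and $\Gamma$ a context of length $k$; $L(z,x)=\sum_{n,k}\ell_{n,k}z^nx^k$ and $L_1(z)$ is the coefficient of $x^1$ in $L$. *)

theory Defs
  imports Main
begin

datatype frm = Atom nat | Prod frm frm

fun fsize :: "frm \<Rightarrow> nat" where
  "fsize (Atom p) = 0"
| "fsize (Prod A B) = 1 + fsize A + fsize B"

fun frontier :: "frm \<Rightarrow> frm list" where
  "frontier (Atom p) = [Atom p]"
| "frontier (Prod A B) = frontier A @ frontier B"

definition std_frontier :: "nat \<Rightarrow> frm list" where
  "std_frontier n = map Atom [0..<Suc n]"

inductive tamari :: "frm \<Rightarrow> frm \<Rightarrow> bool" where
  tam_refl: "tamari A A"
| tam_trans: "tamari A B \<Longrightarrow> tamari B C \<Longrightarrow> tamari A C"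
| tam_assoc: "tamari (Prod (Prod A B) C) (Prod A (Prod B C))"
| tam_cong: "tamari A1 A2 \<Longrightarrow> tamari B1 B2 \<Longrightarrow> tamari (Prod A1 B1) (Prod A2 B2)"

definition is_prod :: "frm \<Rightarrow> bool" where
  "is_prod A = (\<exists>B C. A = Prod B C)"

definition irreducible :: "frm list \<Rightarrow> bool" where
  "irreducible \<Gamma> = (case \<Gamma> of [] \<Rightarrow> True | A # _ \<Rightarrow> \<not> is_prod A)"

text \<open>Each node records the data determining its conclusion:
  \<open>DId p\<close> : p \<turnstile> p;
  \<open>DL A B \<Delta> C d\<close> : A\<bullet>B,\<Delta> \<turnstile> C from d proving A,B,\<Delta> \<turnstile> C;
  \<open>DR \<Gamma> \<Delta> A B d1 d2\<close> : \<Gamma>,\<Delta> \<turnstile> A\<bullet>B from d1 : \<Gamma> \<turnstile> A and d2 : \<Delta> \<turnstile> B.\<close>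
datatype deriv =
    DId nat
  | DL frm frm "frm list" frm deriv
  | DR "frm list" "frm list" frm frm deriv deriv

fun concl :: "deriv \<Rightarrow> frm list \<times> frm" where
  "concl (DId p) = ([Atom p], Atom p)"
| "concl (DL A B \<Delta> C d) = (Prod A B # \<Delta>, C)"
| "concl (DR \<Gamma> \<Delta> A B d1 d2) = (\<Gamma> @ \<Delta>, Prod A B)"

fun focused :: "deriv \<Rightarrow> bool" where
  "focused (DId p) = True"
| "focused (DL A B \<Delta> C d) = (focused d \<and> concl d = (A # B # \<Delta>, C))"
| "focused (DR \<Gamma> \<Delta> A B d1 d2) =
     (focused d1 \<and> focused d2 \<and> concl d1 = (\<Gamma>, A) \<and> concl d2 = (\<Delta>, B) \<and> irreducible \<Gamma>)"

definition ell :: "nat \<Rightarrow> nat \<Rightarrow> nat" where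
  "ell n k = card {d. focused d \<and> length (fst (concl d)) = k \<and>
                      fsize (snd (concl d)) = n \<and> frontier (snd (concl d)) = std_frontier n}"

definition tamari_intervals :: "nat \<Rightarrow> nat" where
  "tamari_intervals n = card {(A, B). fsize A = n \<and> frontier A = std_frontier n \<and>
                                     fsize B = n \<and> frontier B = std_frontier n \<and> tamari A B}"

end

theory Submission
  imports Defs
begin

text \<open>Focused derivations are determined by their end sequents, so \<open>ell n 1\<close> counts the derivable
  sequents \<open>A \<turnstile> B\<close>. Such a sequent is derivable exactly when \<open>A \<le> B\<close>: soundness holds because the
  antecedent of a derivable sequent, bracketed to the left, is Tamari-below its succedent;
  completeness needs identity, the unrestricted right rule and cut, all admissible. Cut is proved by
  induction on the cut formula, reducing a cut on a product through the invertibility of \<open>\<bullet>L\<close> to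
  cuts on its two factors.\<close>

inductive derivable :: "frm list \<Rightarrow> frm \<Rightarrow> bool" where
  derivable_Atom: "derivable [Atom p] (Atom p)"
| derivable_ProdL: "derivable (A # B # \<Delta>) C \<Longrightarrow> derivable (Prod A B # \<Delta>) C"
| derivable_ProdR:
    "derivable \<Gamma> A \<Longrightarrow> derivable \<Delta> B \<Longrightarrow> irreducible \<Gamma> \<Longrightarrow> derivable (\<Gamma> @ \<Delta>) (Prod A B)"

lemma frontier_nonempty: "frontier A \<noteq> []"
  by (induction A) auto

lemma length_frontier: "length (frontier A) = Suc (fsize A)"
  by (induction A) auto

lemma concat_map_frontier_eq_Nil_iff: "concat (map frontier \<Gamma>) = [] \<longleftrightarrow> \<Gamma> = []"
  using frontier_nonempty by (cases \<Gamma>) auto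

lemma frontier_eq_Atom_iff: "frontier A = [Atom p] \<longleftrightarrow> A = Atom p"
  by (cases A) (auto simp: append_eq_Cons_conv frontier_nonempty)

lemma tamari_frontier: "tamari A B \<Longrightarrow> frontier A = frontier B"
  by (induction rule: tamari.induct) auto

lemma tamari_fsize: "tamari A B \<Longrightarrow> fsize A = fsize B"
  using tamari_frontier length_frontier by (metis Suc_inject)

lemma derivable_nonempty: "derivable \<Gamma> C \<Longrightarrow> \<Gamma> \<noteq> []"
  by (induction rule: derivable.induct) auto

lemma derivable_frontier: "derivable \<Gamma> C \<Longrightarrow> concat (map frontier \<Gamma>) = frontier C"
  by (induction rule: derivable.induct) auto

lemma derivable_Atom_iff: "derivable \<Gamma> (Atom p) \<longleftrightarrow> \<Gamma> = [Atom p]"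
proof
  assume "derivable \<Gamma> (Atom p)"
  then have "concat (map frontier \<Gamma>) = [Atom p]"
    by (simp add: derivable_frontier)
  then show "\<Gamma> = [Atom p]"
    by (cases \<Gamma>) (auto simp: append_eq_Cons_conv frontier_nonempty
        concat_map_frontier_eq_Nil_iff frontier_eq_Atom_iff)
qed (simp add: derivable_Atom)

lemma irreducible_append: "\<Gamma> \<noteq> [] \<Longrightarrow> irreducible (\<Gamma> @ \<Delta>) = irreducible \<Gamma>"
  by (cases \<Gamma>) (auto simp: irreducible_def)

lemma derivable_ProdL_inv: "derivable (Prod A B # \<Delta>) C \<Longrightarrow> derivable (A # B # \<Delta>) C"
  by (cases rule: derivable.cases)
    (auto simp: Cons_eq_append_conv irreducible_def is_prod_def dest: derivable_nonempty)

text \<open>The right rule without the focusing side condition: a reducible left context is first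
  decomposed by \<open>\<bullet>L\<close>.\<close>

lemma derivable_ProdR_unfocused:
  "derivable \<Gamma> A \<Longrightarrow> derivable \<Delta> B \<Longrightarrow> derivable (\<Gamma> @ \<Delta>) (Prod A B)"
proof (induction arbitrary: \<Delta> B rule: derivable.induct)
  case (derivable_Atom p)
  then show ?case
    using derivable_ProdR[OF derivable.derivable_Atom] by (simp add: irreducible_def is_prod_def)
next
  case (derivable_ProdL A' B' \<Delta>' C)
  then show ?case
    using derivable.derivable_ProdL by fastforce
next
  case (derivable_ProdR \<Gamma> A \<Delta>' B')
  then have "irreducible (\<Gamma> @ \<Delta>')"
    using irreducible_append derivable_nonempty by blast
  then show ?case
    using derivable.derivable_ProdR[OF derivable.derivable_ProdR[OF derivable_ProdR.hyps]
        derivable_ProdR.prems] by simp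
qed

lemma derivable_refl: "derivable [A] A"
proof (induction A)
  case (Atom p)
  then show ?case by (rule derivable_Atom)
next
  case (Prod A B)
  then have "derivable ([A] @ [B]) (Prod A B)"
    by (rule derivable_ProdR_unfocused)
  then show ?case
    using derivable_ProdL by simp
qed

subsection \<open>Admissibility of cut\<close>

lemma append_eq_append_Cons_cases:
  assumes "xs @ ys = zs @ b # ts"
  obtains us where "xs = zs @ b # us" "ts = us @ ys"
    | us where "zs = xs @ us" "ys = us @ b # ts"
proof -
  obtain us where "xs = zs @ us \<and> us @ ys = b # ts \<or> xs @ us = zs \<and> ys = us @ b # ts"
    using assms by (auto simp: append_eq_append_conv2)
  then show thesis
  proof (elim disjE conjE)
    assume "xs = zs @ us" "us @ ys = b # ts"
    then show thesis
      using that by (cases us) auto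
  qed (use that in blast)
qed

lemma derivable_cut_from_head_cut:
  assumes head_cut: "\<And>\<Theta> C. derivable (B # \<Theta>) C \<Longrightarrow> derivable (\<Gamma> @ \<Theta>) C"
  shows "derivable (\<Delta> @ B # \<Theta>) C \<Longrightarrow> derivable (\<Delta> @ \<Gamma> @ \<Theta>) C"
proof (induction "\<Delta> @ B # \<Theta>" C arbitrary: \<Delta> \<Theta> rule: derivable.induct)
  case (derivable_Atom p)
  then have "\<Delta> = []" "B = Atom p" "\<Theta> = []"
    by (cases \<Delta>; simp)+
  then show ?case
    using head_cut[of "[]"] derivable.derivable_Atom by simp
next
  case (derivable_ProdL A' B' \<Delta>' C)
  show ?case
  proof (cases \<Delta>)
    case Nil
    then show ?thesis
      using derivable_ProdL head_cut derivable.derivable_ProdL by fastforce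
  next
    case (Cons D \<Delta>'')
    then show ?thesis
      using derivable_ProdL.hyps(2)[of "A' # B' # \<Delta>''"] derivable_ProdL.hyps(3)
        derivable.derivable_ProdL by auto
  qed
next
  case (derivable_ProdR \<Sigma>1 C1 \<Sigma>2 C2)
  from \<open>\<Sigma>1 @ \<Sigma>2 = \<Delta> @ B # \<Theta>\<close> show ?case
  proof (cases rule: append_eq_append_Cons_cases)
    case 1
    then show ?thesis
      using derivable_ProdR.hyps(2) derivable_ProdR_unfocused[OF _ derivable_ProdR.hyps(3)]
      by fastforce
  next
    case 2
    then show ?thesis
      using derivable_ProdR.hyps(4) derivable_ProdR_unfocused[OF derivable_ProdR.hyps(1)]
      by fastforce
  qed
qed

lemma derivable_cut_head:
  "derivable \<Gamma> B \<Longrightarrow> derivable (B # \<Theta>) C \<Longrightarrow> derivable (\<Gamma> @ \<Theta>) C"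
proof (induction B arbitrary: \<Gamma> \<Theta> C)
  case (Atom p)
  then show ?case
    by (simp add: derivable_Atom_iff)
next
  case (Prod X Y)
  have "derivable (X # Y # \<Theta>) C"
    using Prod.prems(2) by (rule derivable_ProdL_inv)
  with Prod.prems(1) show ?case
  proof (induction \<Gamma> "Prod X Y" rule: derivable.induct)
    case (derivable_ProdL A B \<Delta>)
    then show ?case
      using derivable.derivable_ProdL by fastforce
  next
    case (derivable_ProdR \<Gamma>1 \<Gamma>2)
    have "derivable ([] @ \<Gamma>1 @ Y # \<Theta>) C"
      using Prod.IH(1)[OF derivable_ProdR.hyps(1) derivable_ProdR.prems] by simp
    then show ?case
      using derivable_cut_from_head_cut[OF Prod.IH(2)[OF derivable_ProdR.hyps(3)], where \<Delta> = \<Gamma>1]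
      by simp
  qed
qed

subsection \<open>Soundness and completeness for the Tamari order\<close>

lemma derivable_if_tamari: "tamari A B \<Longrightarrow> derivable [A] B"
proof (induction rule: tamari.induct)
  case (tam_refl A)
  then show ?case by (rule derivable_refl)
next
  case (tam_trans A B C)
  then show ?case
    using derivable_cut_head[of "[A]" B "[]" C] by simp
next
  case (tam_assoc A B C)
  have "derivable ([A] @ [B] @ [C]) (Prod A (Prod B C))"
    using derivable_ProdR_unfocused[OF derivable_refl derivable_ProdR_unfocused] derivable_refl
    by blast
  then show ?case
    by (auto intro!: derivable_ProdL)
next
  case (tam_cong A1 A2 B1 B2)
  then show ?case
    using derivable_ProdR_unfocused[of "[A1]" A2 "[B1]" B2] derivable_ProdL by simp
qed

definition left_comb :: "frm list \<Rightarrow> frm" where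
  "left_comb \<Gamma> = foldl Prod (hd \<Gamma>) (tl \<Gamma>)"

lemma tamari_foldl_Prod: "tamari (foldl Prod A (B # \<Delta>)) (Prod A (foldl Prod B \<Delta>))"
proof (induction \<Delta> rule: rev_induct)
  case Nil
  then show ?case by (simp add: tam_refl)
next
  case (snoc C \<Delta>)
  then have "tamari (foldl Prod A (B # \<Delta> @ [C])) (Prod (Prod A (foldl Prod B \<Delta>)) C)"
    using tam_cong tam_refl by simp
  then show ?case
    using tam_trans[OF _ tam_assoc] by simp
qed

lemma tamari_left_comb_append:
  assumes "\<Gamma> \<noteq> []" "\<Delta> \<noteq> []"
  shows "tamari (left_comb (\<Gamma> @ \<Delta>)) (Prod (left_comb \<Gamma>) (left_comb \<Delta>))"
proof -
  obtain A \<Gamma>' B \<Delta>' where "\<Gamma> = A # \<Gamma>'" "\<Delta> = B # \<Delta>'"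
    using assms by (meson neq_Nil_conv)
  then show ?thesis
    using tamari_foldl_Prod[of "foldl Prod A \<Gamma>'" B \<Delta>'] by (simp add: left_comb_def)
qed

lemma tamari_left_comb_if_derivable: "derivable \<Gamma> C \<Longrightarrow> tamari (left_comb \<Gamma>) C"
proof (induction rule: derivable.induct)
  case (derivable_Atom p)
  then show ?case by (simp add: left_comb_def tam_refl)
next
  case (derivable_ProdL A B \<Delta> C)
  then show ?case by (simp add: left_comb_def)
next
  case (derivable_ProdR \<Gamma> A \<Delta> B)
  have "tamari (left_comb (\<Gamma> @ \<Delta>)) (Prod (left_comb \<Gamma>) (left_comb \<Delta>))"
    using tamari_left_comb_append derivable_nonempty derivable_ProdR.hyps by blast
  moreover have "tamari (Prod (left_comb \<Gamma>) (left_comb \<Delta>)) (Prod A B)"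
    using derivable_ProdR.IH by (rule tam_cong)
  ultimately show ?case by (rule tam_trans)
qed

lemma derivable_single_iff_tamari: "derivable [A] B \<longleftrightarrow> tamari A B"
  using tamari_left_comb_if_derivable[of "[A]" B] derivable_if_tamari
  by (auto simp: left_comb_def)

subsection \<open>Focused derivations are determined by their end sequents\<close>

lemma derivable_concl_if_focused: "focused d \<Longrightarrow> derivable (fst (concl d)) (snd (concl d))"
  by (induction d) (auto intro: derivable.intros)

lemma focused_if_derivable: "derivable \<Gamma> C \<Longrightarrow> \<exists>d. focused d \<and> concl d = (\<Gamma>, C)"
proof (induction rule: derivable.induct)
  case (derivable_Atom p)
  show ?case
    by (intro exI[of _ "DId p"]) simp
next
  case (derivable_ProdL A B \<Delta> C)
  then obtain d where "focused d" "concl d = (A # B # \<Delta>, C)" by blast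
  then show ?case
    by (intro exI[of _ "DL A B \<Delta> C d"]) simp
next
  case (derivable_ProdR \<Gamma> A \<Delta> B)
  then obtain d1 d2 where "focused d1" "concl d1 = (\<Gamma>, A)" "focused d2" "concl d2 = (\<Delta>, B)"
    by blast
  then show ?case
    using derivable_ProdR by (intro exI[of _ "DR \<Gamma> \<Delta> A B d1 d2"]) simp
qed

lemma concl_focused_image: "concl ` {d. focused d} = {(\<Gamma>, C). derivable \<Gamma> C}"
proof (intro equalityI subsetI)
  fix x assume "x \<in> concl ` {d. focused d}"
  then show "x \<in> {(\<Gamma>, C). derivable \<Gamma> C}"
    using derivable_concl_if_focused by (auto simp: case_prod_beta)
next
  fix x assume "x \<in> {(\<Gamma>, C). derivable \<Gamma> C}"
  then show "x \<in> concl ` {d. focused d}"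
    using focused_if_derivable by (cases x) (metis (mono_tags) case_prod_conv image_eqI mem_Collect_eq)
qed

text \<open>The antecedents of the two premises of \<open>\<bullet>R\<close> are recovered from the frontier of the
  left premise's succedent.\<close>

lemma append_eq_append_frontier_split:
  assumes "\<Gamma> @ \<Delta> = \<Gamma>' @ \<Delta>'" "concat (map frontier \<Gamma>) = concat (map frontier \<Gamma>')"
  shows "\<Gamma> = \<Gamma>'"
proof -
  obtain us where "\<Gamma> = \<Gamma>' @ us \<or> \<Gamma> @ us = \<Gamma>'"
    using assms(1) by (auto simp: append_eq_append_conv2)
  then show ?thesis
    using assms(2) concat_map_frontier_eq_Nil_iff[of us] by auto
qed

lemma focused_DR_concl_ne_DL_concl:
  assumes "focused (DR \<Gamma> \<Delta> A B d1 d2)"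
  shows "concl (DR \<Gamma> \<Delta> A B d1 d2) \<noteq> concl (DL A' B' \<Delta>' C d)"
proof -
  have "\<Gamma> \<noteq> []"
    using assms derivable_concl_if_focused[of d1] derivable_nonempty by auto
  then have "irreducible (\<Gamma> @ \<Delta>)"
    using assms irreducible_append by simp
  then show ?thesis
    by (auto simp: irreducible_def is_prod_def)
qed

lemma focused_concl_inj: "inj_on concl {d. focused d}"
proof -
  have "d1 = d2" if "focused d1" "focused d2" "concl d1 = concl d2" for d1 d2
    using that
  proof (induction d1 arbitrary: d2)
    case (DId p)
    then show ?case by (cases d2) auto
  next
    case (DL A B \<Delta> C d)
    then show ?case
      using focused_DR_concl_ne_DL_concl by (cases d2) (auto, metis)
  next
    case (DR \<Gamma> \<Delta> A B e1 e2)
    then show ?case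
    proof (cases d2)
      case (DR \<Gamma>' \<Delta>' A' B' e1' e2')
      have "concat (map frontier \<Gamma>) = concat (map frontier \<Gamma>')"
        using DR.prems DR derivable_frontier[OF derivable_concl_if_focused[of e1]]
          derivable_frontier[OF derivable_concl_if_focused[of e1']] by simp
      then have "\<Gamma> = \<Gamma>'"
        using DR.prems(3) DR append_eq_append_frontier_split by auto
      then show ?thesis
        using DR.prems DR.IH DR by simp
    qed (use focused_DR_concl_ne_DL_concl in auto)
  qed
  then show ?thesis
    by (auto intro: inj_onI)
qed

lemma ell_eq_card_derivable:
  "ell n k = card {(\<Gamma>, C). derivable \<Gamma> C \<and> length \<Gamma> = k \<and> fsize C = n \<and>
                           frontier C = std_frontier n}"
proof -
  let ?P = "\<lambda>x. length (fst x) = k \<and> fsize (snd x) = n \<and> frontier (snd x) = std_frontier n"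
  have "ell n k = card {d \<in> {d. focused d}. ?P (concl d)}"
    by (simp add: ell_def)
  also have "\<dots> = card (concl ` {d \<in> {d. focused d}. ?P (concl d)})"
    by (rule card_image[symmetric, OF inj_on_subset[OF focused_concl_inj]]) blast
  also have "concl ` {d \<in> {d. focused d}. ?P (concl d)} = {x \<in> concl ` {d. focused d}. ?P x}"
    by blast
  finally show ?thesis
    by (simp add: concl_focused_image conj_ac split_def)
qed

theorem proposition3p1:
  fixes n :: nat
  shows "ell n 1 = tamari_intervals n"
proof -
  let ?T = "{(A, B). fsize A = n \<and> frontier A = std_frontier n \<and>
                     fsize B = n \<and> frontier B = std_frontier n \<and> tamari A B}"
  have "{(\<Gamma>, C). derivable \<Gamma> C \<and> length \<Gamma> = 1 \<and> fsize C = n \<and> frontier C = std_frontier n}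
        = (\<lambda>(A, B). ([A], B)) ` ?T"
  proof (intro equalityI subsetI)
    fix x
    assume "x \<in> {(\<Gamma>, C). derivable \<Gamma> C \<and> length \<Gamma> = 1 \<and> fsize C = n \<and> frontier C = std_frontier n}"
    then obtain A B where "x = ([A], B)" "tamari A B" "fsize B = n" "frontier B = std_frontier n"
      by (auto simp: length_Suc_conv derivable_single_iff_tamari)
    then show "x \<in> (\<lambda>(A, B). ([A], B)) ` ?T"
      using tamari_frontier[of A B] tamari_fsize[of A B] by (intro image_eqI[of _ _ "(A, B)"]) auto
  qed (auto simp: derivable_single_iff_tamari)
  moreover have "inj_on (\<lambda>(A, B). ([A], B)) ?T"
    by (auto intro: inj_onI)
  ultimately show ?thesis
    by (simp add: ell_eq_card_derivable card_image tamari_intervals_def)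
qed

end
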